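(* Let $S$ be an inverse semigroup that is a mirror semigroup, with semilattice of idempotents $\Sigma=\Sigma(S)$. Then $(S,\leqslant)$ is continuous (resp. algebraic) if and only if $(\Sigma,\leqslant)$ is continuous (resp. algebraic).
   Context: An inverse semigroup is a semigroup $S$ in which every $s$ has a unique $s^*$ with $ss^*s=s$ and $s^*ss^*=s^*$. $\Sigma(S)$ is the set of idempotents. The intrinsic order is $s\leqslant t$ iff $s=t\epsilon$ for some idempotent $\epsilon$. A subset is directed if nonempty and any two elements have an upper bound in it. $S$ is a mirror semigroup if every directed subset of $\Sigma$ having a supremum in $(\Sigma,\leqslant)$ also has a supremum in $(S,\leqslant)$. In a poset, $x$ is way-below $y$ ($x\ll y$) if for every directed subset $D$ that has a supremum with $y\leqslant \sup D$, there is $d\in D$ with $x\leqslant d$. A poset is continuous if for every $s$ the set $\{t : t\ll s\}$ is directed with supremum $s$. An element $k$ is compact if $k\ll k$; a poset is algebraic if every element is the supremum of the directed set of compact elements below it. (The way-below relation, continuity and algebraicity of $\Sigma$ are taken with respect to the poset $(\Sigma,\leqslant)$ itself.) *)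

theory Defs
  imports Main
begin

definition inverse_semigroup :: "('a \<Rightarrow> 'a \<Rightarrow> 'a) \<Rightarrow> bool" where
  "inverse_semigroup m \<longleftrightarrow>
     (\<forall>x y z. m (m x y) z = m x (m y z)) \<and>
     (\<forall>s. \<exists>!t. m (m s t) s = s \<and> m (m t s) t = t)"

definition idems :: "('a \<Rightarrow> 'a \<Rightarrow> 'a) \<Rightarrow> 'a set" where
  "idems m = {e. m e e = e}"

definition nat_le :: "('a \<Rightarrow> 'a \<Rightarrow> 'a) \<Rightarrow> 'a \<Rightarrow> 'a \<Rightarrow> bool" where
  "nat_le m s t \<longleftrightarrow> (\<exists>e\<in>idems m. s = m t e)"

definition directed_in :: "'a set \<Rightarrow> ('a \<Rightarrow> 'a \<Rightarrow> bool) \<Rightarrow> 'a set \<Rightarrow> bool" where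
  "directed_in P le D \<longleftrightarrow> D \<noteq> {} \<and> D \<subseteq> P \<and>
     (\<forall>x\<in>D. \<forall>y\<in>D. \<exists>z\<in>D. le x z \<and> le y z)"

definition is_sup_in :: "'a set \<Rightarrow> ('a \<Rightarrow> 'a \<Rightarrow> bool) \<Rightarrow> 'a set \<Rightarrow> 'a \<Rightarrow> bool" where
  "is_sup_in P le D s \<longleftrightarrow> s \<in> P \<and> (\<forall>d\<in>D. le d s) \<and>
     (\<forall>u\<in>P. (\<forall>d\<in>D. le d u) \<longrightarrow> le s u)"

definition has_sup_in :: "'a set \<Rightarrow> ('a \<Rightarrow> 'a \<Rightarrow> bool) \<Rightarrow> 'a set \<Rightarrow> bool" where
  "has_sup_in P le D \<longleftrightarrow> (\<exists>s. is_sup_in P le D s)"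

definition way_below_in :: "'a set \<Rightarrow> ('a \<Rightarrow> 'a \<Rightarrow> bool) \<Rightarrow> 'a \<Rightarrow> 'a \<Rightarrow> bool" where
  "way_below_in P le x y \<longleftrightarrow>
     (\<forall>D s. directed_in P le D \<and> is_sup_in P le D s \<and> le y s \<longrightarrow> (\<exists>d\<in>D. le x d))"

definition continuous_in :: "'a set \<Rightarrow> ('a \<Rightarrow> 'a \<Rightarrow> bool) \<Rightarrow> bool" where
  "continuous_in P le \<longleftrightarrow>
     (\<forall>s\<in>P. directed_in P le {t\<in>P. way_below_in P le t s} \<and>
             is_sup_in P le {t\<in>P. way_below_in P le t s} s)"

definition compact_in :: "'a set \<Rightarrow> ('a \<Rightarrow> 'a \<Rightarrow> bool) \<Rightarrow> 'a \<Rightarrow> bool" where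
  "compact_in P le k \<longleftrightarrow> way_below_in P le k k"

definition algebraic_in :: "'a set \<Rightarrow> ('a \<Rightarrow> 'a \<Rightarrow> bool) \<Rightarrow> bool" where
  "algebraic_in P le \<longleftrightarrow>
     (\<forall>s\<in>P. directed_in P le {k\<in>P. compact_in P le k \<and> le k s} \<and>
             is_sup_in P le {k\<in>P. compact_in P le k \<and> le k s} s)"

definition mirror_semigroup :: "('a \<Rightarrow> 'a \<Rightarrow> 'a) \<Rightarrow> bool" where
  "mirror_semigroup m \<longleftrightarrow>
     (\<forall>D. directed_in (idems m) (nat_le m) D \<and> has_sup_in (idems m) (nat_le m) D
          \<longrightarrow> has_sup_in UNIV (nat_le m) D)"

end

theory Submission
  imports Defs
begin

(* Everything in S is controlled by domain idempotents: t \<le> s iff t = s (t\<^sup>* t), the elements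
  below s are the s e with e \<le> s\<^sup>* s, and d \<mapsto> d\<^sup>* d carries directed suprema in S to directed
  suprema in \<Sigma>.  The mirror property makes directed suprema computed in \<Sigma> suprema in S as well.
  Consequently way-below (hence compactness) between idempotents is the same in \<Sigma> and in S,
  t \<ll> s holds as soon as t \<le> s and t\<^sup>* t \<ll> s\<^sup>* s, and s E is directed with supremum s whenever
  E is directed with supremum s\<^sup>* s.  So the approximants of s\<^sup>* s in \<Sigma>, translated by s,
  form a cofinal family of approximants of s in S, and conversely the approximants of an
  idempotent in S already lie in \<Sigma>. *)

lemma way_below_in_imp_le:
  assumes "y \<in> P" "le y y" "way_below_in P le x y"
  shows "le x y"
proof -
  have "directed_in P le {y}" "is_sup_in P le {y} y"
    using assms(1,2) by (auto simp: directed_in_def is_sup_in_def)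
  then show ?thesis
    using assms(2,3) unfolding way_below_in_def by blast
qed

lemma directed_in_image:
  assumes "directed_in P le D" "f ` D \<subseteq> Q" "\<And>x y. x \<in> D \<Longrightarrow> y \<in> D \<Longrightarrow> le x y \<Longrightarrow> le' (f x) (f y)"
  shows "directed_in Q le' (f ` D)"
  unfolding directed_in_def
proof (intro conjI ballI)
  fix x' y'
  assume "x' \<in> f ` D" "y' \<in> f ` D"
  then obtain x y where "x \<in> D" "y \<in> D" "x' = f x" "y' = f y"
    by blast
  then show "\<exists>z'\<in>f ` D. le' x' z' \<and> le' y' z'"
    using assms(1,3) unfolding directed_in_def by (metis image_eqI)
qed (use assms(1,2) in \<open>auto simp: directed_in_def\<close>)

lemma directed_sup_restrict:
  assumes "directed_in Q le D" "is_sup_in Q le D s" "D \<subseteq> P" "s \<in> P" "P \<subseteq> Q"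
  shows "directed_in P le D \<and> is_sup_in P le D s"
  using assms by (auto simp: directed_in_def is_sup_in_def)

lemma directed_sup_cofinal:
  assumes "transp le" "directed_in P le D" "is_sup_in P le D s" "D \<subseteq> W" "W \<subseteq> P"
    and cofinal: "\<forall>x\<in>W. \<exists>d\<in>D. le x d"
  shows "directed_in P le W \<and> is_sup_in P le W s"
proof
  show "directed_in P le W"
    unfolding directed_in_def
  proof (intro conjI ballI)
    fix x y
    assume "x \<in> W" "y \<in> W"
    then obtain d1 d2 where "d1 \<in> D" "d2 \<in> D" "le x d1" "le y d2"
      using cofinal by meson
    then obtain d where "d \<in> D" "le d1 d" "le d2 d"
      using assms(2) unfolding directed_in_def by meson
    then show "\<exists>z\<in>W. le x z \<and> le y z"
      using \<open>le x d1\<close> \<open>le y d2\<close> \<open>D \<subseteq> W\<close> \<open>transp le\<close> by (meson subsetD transpE)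
  qed (use assms(2,4,5) in \<open>auto simp: directed_in_def\<close>)
  show "is_sup_in P le W s"
    using assms(3,4) cofinal \<open>transp le\<close> unfolding is_sup_in_def by (meson subsetD transpE)
qed

locale inverse_sgrp =
  fixes m :: "'a \<Rightarrow> 'a \<Rightarrow> 'a" (infixl "\<odot>" 70)
  assumes inverse_semigroup: "inverse_semigroup m"
begin

lemma assoc: "x \<odot> y \<odot> z = x \<odot> (y \<odot> z)"
  using inverse_semigroup by (simp add: inverse_semigroup_def)

lemma ex1_sinv: "\<exists>!t. s \<odot> t \<odot> s = s \<and> t \<odot> s \<odot> t = t"
  using inverse_semigroup unfolding inverse_semigroup_def by blast

definition sinv :: "'a \<Rightarrow> 'a" where
  "sinv s = (THE t. s \<odot> t \<odot> s = s \<and> t \<odot> s \<odot> t = t)"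

abbreviation dom_idem :: "'a \<Rightarrow> 'a" where
  "dom_idem s \<equiv> sinv s \<odot> s"

lemma sinv: "s \<odot> sinv s \<odot> s = s" "dom_idem s \<odot> sinv s = sinv s"
  using theI'[OF ex1_sinv[of s]] by (simp_all add: sinv_def)

lemma sinv_unique: "s \<odot> t \<odot> s = s \<Longrightarrow> t \<odot> s \<odot> t = t \<Longrightarrow> sinv s = t"
  using ex1_sinv[of s] sinv[of s] by blast

lemma sinv_cancel [simp]:
  "s \<odot> dom_idem s = s" "sinv s \<odot> (s \<odot> sinv s) = sinv s"
  "s \<odot> (sinv s \<odot> (s \<odot> z)) = s \<odot> z" "sinv s \<odot> (s \<odot> (sinv s \<odot> z)) = sinv s \<odot> z"
  by (metis sinv assoc)+

lemma sinv_sinv [simp]: "sinv (sinv s) = s"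
  by (rule sinv_unique) (simp_all add: assoc)

lemma idems_iff: "e \<in> idems m \<longleftrightarrow> e \<odot> e = e"
  by (simp add: idems_def)

lemma idem_left: "e \<in> idems m \<Longrightarrow> e \<odot> (e \<odot> z) = e \<odot> z"
  by (metis assoc idems_iff)

lemma sinv_idem: "e \<in> idems m \<Longrightarrow> sinv e = e"
  by (rule sinv_unique) (simp_all add: idems_iff)

lemma dom_idem_in_idems [simp]: "dom_idem s \<in> idems m" "s \<odot> sinv s \<in> idems m"
  by (simp_all add: idems_iff assoc)

text \<open>The inverse of \<open>e f\<close> is \<open>f (e f)\<^sup>* e\<close>, which is visibly idempotent; hence so is \<open>e f\<close>.\<close>
lemma idems_mult_closed:
  assumes "e \<in> idems m" "f \<in> idems m"
  shows "e \<odot> f \<in> idems m"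
proof -
  let ?x = "sinv (e \<odot> f)"
  have x: "?x \<odot> (e \<odot> (f \<odot> (?x \<odot> z))) = ?x \<odot> z" for z
    by (metis sinv_cancel(4) assoc)
  have "?x = f \<odot> ?x \<odot> e"
  proof (rule sinv_unique)
    show "e \<odot> f \<odot> (f \<odot> ?x \<odot> e) \<odot> (e \<odot> f) = e \<odot> f"
      using sinv(1)[of "e \<odot> f"] assms by (simp add: assoc idem_left)
    show "f \<odot> ?x \<odot> e \<odot> (e \<odot> f) \<odot> (f \<odot> ?x \<odot> e) = f \<odot> ?x \<odot> e"
      using x assms by (simp add: assoc idem_left)
  qed
  then have "?x \<in> idems m"
    by (metis x assoc idems_iff)
  then show ?thesis
    using sinv_idem by fastforce
qed

lemma idems_comm:
  assumes "e \<in> idems m" "f \<in> idems m"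
  shows "e \<odot> f = f \<odot> e"
proof -
  have ef: "e \<odot> f \<in> idems m" "f \<odot> e \<in> idems m"
    using assms idems_mult_closed by blast+
  have "sinv (e \<odot> f) = f \<odot> e"
    by (rule sinv_unique) (use ef assms in \<open>simp_all add: assoc idem_left idems_iff\<close>)
  then show ?thesis
    using sinv_idem[OF ef(1)] by simp
qed

lemma sinv_mult: "sinv (a \<odot> b) = sinv b \<odot> sinv a"
proof (rule sinv_unique)
  have c: "b \<odot> sinv b \<odot> dom_idem a = dom_idem a \<odot> (b \<odot> sinv b)"
    by (rule idems_comm) simp_all
  show "a \<odot> b \<odot> (sinv b \<odot> sinv a) \<odot> (a \<odot> b) = a \<odot> b"
    by (metis c assoc sinv_cancel(1,3))
  show "sinv b \<odot> sinv a \<odot> (a \<odot> b) \<odot> (sinv b \<odot> sinv a) = sinv b \<odot> sinv a"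
    by (metis c assoc sinv_cancel(2,4))
qed

abbreviation below :: "'a \<Rightarrow> 'a \<Rightarrow> bool" (infix "\<preceq>" 50) where
  "below \<equiv> nat_le m"

lemma dom_idem_mult_idem:
  assumes "e \<in> idems m"
  shows "dom_idem (s \<odot> e) = dom_idem s \<odot> e"
proof -
  have "dom_idem (s \<odot> e) = e \<odot> dom_idem s \<odot> e"
    by (simp add: sinv_mult sinv_idem assms assoc)
  also have "\<dots> = dom_idem s \<odot> e"
    using idems_comm[OF assms dom_idem_in_idems(1)] assms by (simp add: assoc idems_iff)
  finally show ?thesis .
qed

lemma below_iff: "t \<preceq> s \<longleftrightarrow> t = s \<odot> dom_idem t"
proof
  assume "t \<preceq> s"
  then obtain e where "e \<in> idems m" "t = s \<odot> e"
    by (auto simp: nat_le_def)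
  then show "t = s \<odot> dom_idem t"
    by (simp add: dom_idem_mult_idem assoc)
next
  assume "t = s \<odot> dom_idem t"
  then show "t \<preceq> s"
    unfolding nat_le_def by (metis dom_idem_in_idems(1))
qed

lemma mult_idem_below: "e \<in> idems m \<Longrightarrow> s \<odot> e \<preceq> s"
  by (auto simp: nat_le_def)

lemma below_refl: "s \<preceq> s"
  using below_iff by simp

lemma below_trans: "t \<preceq> s \<Longrightarrow> s \<preceq> r \<Longrightarrow> t \<preceq> r"
  unfolding nat_le_def by (metis assoc idems_mult_closed)

lemma below_antisym: "t \<preceq> s \<Longrightarrow> s \<preceq> t \<Longrightarrow> t = s"
  unfolding nat_le_def by (metis assoc idems_comm idems_iff)

lemma below_idem: "t \<preceq> e \<Longrightarrow> e \<in> idems m \<Longrightarrow> t \<in> idems m"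
  unfolding nat_le_def using idems_mult_closed by blast

lemma idems_below_iff: "e \<in> idems m \<Longrightarrow> f \<in> idems m \<Longrightarrow> e \<preceq> f \<longleftrightarrow> e = f \<odot> e"
  unfolding nat_le_def by (metis idem_left)

lemma idem_mult_below:
  assumes "g \<in> idems m"
  shows "g \<odot> s \<preceq> s"
proof -
  have "g \<odot> s = s \<odot> (sinv s \<odot> (g \<odot> s))"
    using idems_comm[OF dom_idem_in_idems(2)[of s] assms] by (metis assoc sinv_cancel(1))
  moreover have "sinv s \<odot> (g \<odot> s) = dom_idem (g \<odot> s)"
    using assms by (simp add: sinv_mult sinv_idem assoc idem_left)
  then have "sinv s \<odot> (g \<odot> s) \<in> idems m"
    by simp
  ultimately show ?thesis
    unfolding nat_le_def by blast
qed

lemma mult_left_mono: "t \<preceq> u \<Longrightarrow> s \<odot> t \<preceq> s \<odot> u"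
  unfolding nat_le_def by (metis assoc)

lemma dom_idem_mono: "t \<preceq> s \<Longrightarrow> dom_idem t \<preceq> dom_idem s"
  unfolding nat_le_def by (metis dom_idem_mult_idem assoc)

lemma directed_sup_dom_idem:
  assumes "directed_in UNIV (\<preceq>) D" "is_sup_in UNIV (\<preceq>) D u"
  shows "directed_in (idems m) (\<preceq>) (dom_idem ` D) \<and>
         is_sup_in (idems m) (\<preceq>) (dom_idem ` D) (dom_idem u)"
proof
  show "directed_in (idems m) (\<preceq>) (dom_idem ` D)"
    by (rule directed_in_image[OF assms(1)]) (auto intro: dom_idem_mono)
  have ub: "\<forall>d\<in>D. d \<preceq> u"
    using assms(2) by (simp add: is_sup_in_def)
  have "dom_idem u \<preceq> g"
    if g: "g \<in> idems m" "\<forall>d\<in>D. dom_idem d \<preceq> g" for g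
  proof -
    have "d \<preceq> u \<odot> g" if "d \<in> D" for d
    proof -
      have "d = u \<odot> dom_idem d"
        using ub that below_iff by blast
      also have "\<dots> = u \<odot> g \<odot> dom_idem d"
        using g that idems_below_iff by (simp add: assoc)
      finally show ?thesis
        unfolding nat_le_def by (metis dom_idem_in_idems(1))
    qed
    then have "u \<preceq> u \<odot> g"
      using assms(2) by (auto simp: is_sup_in_def)
    then have "u \<odot> g = u"
      using below_antisym mult_idem_below g(1) by blast
    then have "dom_idem u = g \<odot> dom_idem u"
      using idems_comm[OF dom_idem_in_idems(1)[of u] g(1)] by (metis assoc)
    then show ?thesis
      using idems_below_iff g(1) by simp
  qed
  then show "is_sup_in (idems m) (\<preceq>) (dom_idem ` D) (dom_idem u)"
    using ub dom_idem_mono unfolding is_sup_in_def by auto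
qed

lemma way_below_of_dom_idem:
  assumes "t \<preceq> s" "way_below_in (idems m) (\<preceq>) (dom_idem t) (dom_idem s)"
  shows "way_below_in UNIV (\<preceq>) t s"
  unfolding way_below_in_def
proof (intro allI impI, elim conjE)
  fix D u
  assume D: "directed_in UNIV (\<preceq>) D" "is_sup_in UNIV (\<preceq>) D u" "s \<preceq> u"
  have "dom_idem s \<preceq> dom_idem u"
    using D(3) dom_idem_mono by blast
  then obtain d where d: "d \<in> D" "dom_idem t \<preceq> dom_idem d"
    using assms(2) directed_sup_dom_idem[OF D(1,2)] unfolding way_below_in_def by blast
  have "d \<preceq> u"
    using D(2) d(1) by (auto simp: is_sup_in_def)
  have "t = u \<odot> dom_idem t"
    using below_trans[OF assms(1) D(3)] below_iff by blast
  also have "\<dots> = u \<odot> (dom_idem d \<odot> dom_idem t)"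
    using d(2) idems_below_iff by simp
  also have "\<dots> = d \<odot> dom_idem t"
    using \<open>d \<preceq> u\<close> below_iff by (metis assoc)
  finally show "\<exists>d\<in>D. t \<preceq> d"
    using d(1) mult_idem_below by (metis dom_idem_in_idems(1))
qed

lemma dom_idem_mult_below:
  assumes "e \<in> idems m" "e \<preceq> dom_idem s"
  shows "dom_idem (s \<odot> e) = e"
  using assms dom_idem_mult_idem idems_below_iff by simp

lemma mult_way_below:
  assumes "e \<in> idems m" "way_below_in (idems m) (\<preceq>) e (dom_idem s)"
  shows "way_below_in UNIV (\<preceq>) (s \<odot> e) s"
proof -
  have "e \<preceq> dom_idem s"
    using way_below_in_imp_le[OF dom_idem_in_idems(1) below_refl assms(2)] .
  then show ?thesis
    using way_below_of_dom_idem[of "s \<odot> e" s] assms mult_idem_below dom_idem_mult_below by simp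
qed

lemma mult_compact:
  assumes "e \<in> idems m" "compact_in (idems m) (\<preceq>) e" "e \<preceq> dom_idem s"
  shows "compact_in UNIV (\<preceq>) (s \<odot> e)"
  using way_below_of_dom_idem[of "s \<odot> e" "s \<odot> e"] assms below_refl dom_idem_mult_below
  unfolding compact_in_def by simp

end

locale mirror_sgrp = inverse_sgrp +
  assumes mirror_semigroup: "mirror_semigroup m"
begin

lemma is_sup_idems_imp_is_sup:
  assumes "directed_in (idems m) (\<preceq>) D" "is_sup_in (idems m) (\<preceq>) D g"
  shows "is_sup_in UNIV (\<preceq>) D g"
proof -
  obtain u where u: "is_sup_in UNIV (\<preceq>) D u"
    using mirror_semigroup assms unfolding mirror_semigroup_def has_sup_in_def by blast
  have "u \<preceq> g"
    using u assms(2) by (auto simp: is_sup_in_def)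
  then have "u \<in> idems m"
    using assms(2) below_idem by (auto simp: is_sup_in_def)
  then have "g \<preceq> u"
    using u assms(2) by (auto simp: is_sup_in_def)
  then show ?thesis
    using u below_antisym \<open>u \<preceq> g\<close> by blast
qed

lemma way_below_idems_iff:
  assumes "e \<in> idems m" "f \<in> idems m"
  shows "way_below_in UNIV (\<preceq>) e f \<longleftrightarrow> way_below_in (idems m) (\<preceq>) e f"
proof
  assume wb: "way_below_in UNIV (\<preceq>) e f"
  show "way_below_in (idems m) (\<preceq>) e f"
    unfolding way_below_in_def
  proof (intro allI impI, elim conjE)
    fix D g
    assume "directed_in (idems m) (\<preceq>) D" "is_sup_in (idems m) (\<preceq>) D g" "f \<preceq> g"
    moreover have "directed_in UNIV (\<preceq>) D"
      using calculation(1) by (simp add: directed_in_def)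
    ultimately show "\<exists>d\<in>D. e \<preceq> d"
      using wb is_sup_idems_imp_is_sup unfolding way_below_in_def by blast
  qed
next
  assume "way_below_in (idems m) (\<preceq>) e f"
  moreover have "e \<preceq> f"
    using way_below_in_imp_le[OF assms(2) below_refl] calculation .
  ultimately show "way_below_in UNIV (\<preceq>) e f"
    using way_below_of_dom_idem assms by (simp add: sinv_idem idems_iff)
qed

lemma directed_sup_translate:
  assumes E: "directed_in (idems m) (\<preceq>) E" "is_sup_in (idems m) (\<preceq>) E (dom_idem s)"
  shows "directed_in UNIV (\<preceq>) ((\<odot>) s ` E) \<and> is_sup_in UNIV (\<preceq>) ((\<odot>) s ` E) s"
proof
  have E_idems: "E \<subseteq> idems m"
    using E(1) by (simp add: directed_in_def)
  show "directed_in UNIV (\<preceq>) ((\<odot>) s ` E)"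
    by (rule directed_in_image[OF E(1)]) (auto intro: mult_left_mono)
  have E_below: "e = dom_idem s \<odot> e" if "e \<in> E" for e
    using E(2) E_idems that idems_below_iff[of e "dom_idem s"] unfolding is_sup_in_def by auto
  have "s \<preceq> v" if v: "\<forall>e\<in>E. s \<odot> e \<preceq> v" for v
  proof -
    have "e \<preceq> sinv s \<odot> v" if "e \<in> E" for e
    proof -
      have "s \<odot> e = v \<odot> dom_idem (s \<odot> e)"
        using v that below_iff by blast
      also have "\<dots> = v \<odot> e"
        using dom_idem_mult_idem E_idems E_below that by (metis subsetD)
      finally have "e = sinv s \<odot> v \<odot> e"
        using E_below that by (metis assoc)
      then show ?thesis
        using E_idems that mult_idem_below by (metis subsetD)
    qed
    then have "dom_idem s \<preceq> sinv s \<odot> v"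
      using is_sup_idems_imp_is_sup[OF E] by (auto simp: is_sup_in_def)
    then have "s = s \<odot> sinv s \<odot> (v \<odot> dom_idem s)"
      using below_iff sinv_idem[OF dom_idem_in_idems(1)] by (metis assoc sinv_cancel(1))
    then have "s \<preceq> v \<odot> dom_idem s"
      using idem_mult_below[OF dom_idem_in_idems(2)] by (metis assoc)
    then show ?thesis
      using below_trans mult_idem_below dom_idem_in_idems(1) by blast
  qed
  then show "is_sup_in UNIV (\<preceq>) ((\<odot>) s ` E) s"
    using E_idems mult_idem_below unfolding is_sup_in_def by auto
qed

lemma continuous_idems_if_continuous:
  assumes "continuous_in UNIV (\<preceq>)"
  shows "continuous_in (idems m) (\<preceq>)"
  unfolding continuous_in_def
proof
  fix e
  assume e: "e \<in> idems m"
  let ?A = "{t\<in>idems m. way_below_in (idems m) (\<preceq>) t e}"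
  have "t \<in> idems m" if "way_below_in UNIV (\<preceq>) t e" for t
    using way_below_in_imp_le[OF UNIV_I below_refl that] below_idem e by blast
  then have approx: "{t. way_below_in UNIV (\<preceq>) t e} = ?A"
    using e way_below_idems_iff by blast
  have "directed_in UNIV (\<preceq>) {t. way_below_in UNIV (\<preceq>) t e} \<and>
      is_sup_in UNIV (\<preceq>) {t. way_below_in UNIV (\<preceq>) t e} e"
    using assms unfolding continuous_in_def by simp
  then have "directed_in UNIV (\<preceq>) ?A \<and> is_sup_in UNIV (\<preceq>) ?A e"
    unfolding approx .
  then show "directed_in (idems m) (\<preceq>) ?A \<and> is_sup_in (idems m) (\<preceq>) ?A e"
    using directed_sup_restrict[of UNIV "(\<preceq>)" ?A e "idems m"] e by blast
qed

lemma algebraic_idems_if_algebraic: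
  assumes "algebraic_in UNIV (\<preceq>)"
  shows "algebraic_in (idems m) (\<preceq>)"
  unfolding algebraic_in_def
proof
  fix e
  assume e: "e \<in> idems m"
  let ?A = "{k\<in>idems m. compact_in (idems m) (\<preceq>) k \<and> k \<preceq> e}"
  have approx: "{k. compact_in UNIV (\<preceq>) k \<and> k \<preceq> e} = ?A"
    using e below_idem way_below_idems_iff unfolding compact_in_def by blast
  have "directed_in UNIV (\<preceq>) {k. compact_in UNIV (\<preceq>) k \<and> k \<preceq> e} \<and>
      is_sup_in UNIV (\<preceq>) {k. compact_in UNIV (\<preceq>) k \<and> k \<preceq> e} e"
    using assms unfolding algebraic_in_def by simp
  then have "directed_in UNIV (\<preceq>) ?A \<and> is_sup_in UNIV (\<preceq>) ?A e"
    unfolding approx .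
  then show "directed_in (idems m) (\<preceq>) ?A \<and> is_sup_in (idems m) (\<preceq>) ?A e"
    using directed_sup_restrict[of UNIV "(\<preceq>)" ?A e "idems m"] e by blast
qed

lemma continuous_if_continuous_idems:
  assumes "continuous_in (idems m) (\<preceq>)"
  shows "continuous_in UNIV (\<preceq>)"
  unfolding continuous_in_def
proof
  fix s
  let ?E = "{e\<in>idems m. way_below_in (idems m) (\<preceq>) e (dom_idem s)}"
  have "directed_in (idems m) (\<preceq>) ?E" "is_sup_in (idems m) (\<preceq>) ?E (dom_idem s)"
    using assms unfolding continuous_in_def by simp_all
  then have sE: "directed_in UNIV (\<preceq>) ((\<odot>) s ` ?E)" "is_sup_in UNIV (\<preceq>) ((\<odot>) s ` ?E) s"
    using directed_sup_translate by blast+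
  show "directed_in UNIV (\<preceq>) {t\<in>UNIV. way_below_in UNIV (\<preceq>) t s} \<and>
      is_sup_in UNIV (\<preceq>) {t\<in>UNIV. way_below_in UNIV (\<preceq>) t s} s"
  proof (rule directed_sup_cofinal[OF _ sE])
    show "transp (\<preceq>)"
      using below_trans by (blast intro: transpI)
    show "(\<odot>) s ` ?E \<subseteq> {t\<in>UNIV. way_below_in UNIV (\<preceq>) t s}"
      using mult_way_below by blast
    show "\<forall>t\<in>{t\<in>UNIV. way_below_in UNIV (\<preceq>) t s}. \<exists>d\<in>(\<odot>) s ` ?E. t \<preceq> d"
      using sE below_refl unfolding way_below_in_def by blast
  qed simp
qed

lemma algebraic_if_algebraic_idems:
  assumes "algebraic_in (idems m) (\<preceq>)"
  shows "algebraic_in UNIV (\<preceq>)"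
  unfolding algebraic_in_def
proof
  fix s
  let ?E = "{e\<in>idems m. compact_in (idems m) (\<preceq>) e \<and> e \<preceq> dom_idem s}"
  have "directed_in (idems m) (\<preceq>) ?E" "is_sup_in (idems m) (\<preceq>) ?E (dom_idem s)"
    using assms unfolding algebraic_in_def by simp_all
  then have sE: "directed_in UNIV (\<preceq>) ((\<odot>) s ` ?E)" "is_sup_in UNIV (\<preceq>) ((\<odot>) s ` ?E) s"
    using directed_sup_translate by blast+
  show "directed_in UNIV (\<preceq>) {k\<in>UNIV. compact_in UNIV (\<preceq>) k \<and> k \<preceq> s} \<and>
      is_sup_in UNIV (\<preceq>) {k\<in>UNIV. compact_in UNIV (\<preceq>) k \<and> k \<preceq> s} s"
  proof (rule directed_sup_cofinal[OF _ sE])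
    show "transp (\<preceq>)"
      using below_trans by (blast intro: transpI)
    show "(\<odot>) s ` ?E \<subseteq> {k\<in>UNIV. compact_in UNIV (\<preceq>) k \<and> k \<preceq> s}"
      using mult_compact mult_idem_below by blast
    show "\<forall>k\<in>{k\<in>UNIV. compact_in UNIV (\<preceq>) k \<and> k \<preceq> s}. \<exists>d\<in>(\<odot>) s ` ?E. k \<preceq> d"
      using sE unfolding compact_in_def way_below_in_def by blast
  qed simp
qed

end

theorem theorem5p3:
  fixes m :: "'a \<Rightarrow> 'a \<Rightarrow> 'a"
  assumes "inverse_semigroup m"
    and "mirror_semigroup m"
  shows "(continuous_in UNIV (nat_le m) \<longleftrightarrow> continuous_in (idems m) (nat_le m)) \<and>
         (algebraic_in UNIV (nat_le m) \<longleftrightarrow> algebraic_in (idems m) (nat_le m))"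
proof -
  interpret mirror_sgrp m
    using assms by unfold_locales
  show ?thesis
    using continuous_idems_if_continuous continuous_if_continuous_idems
      algebraic_idems_if_algebraic algebraic_if_algebraic_idems by blast
qed

end
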